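(* Let $L, S, M$ be positive integers and $n = 3L$. Let $\mathbf{D}\in\mathbb{R}^{n\times S}$ and $\mathbf{U}\in\mathbb{R}^{M\times S}$ be real matrices, and let $\mathbf{W}\in\mathbb{R}^{n\times n}$ be a diagonal matrix with nonnegative diagonal entries. Define $$\mathbf{A}=\frac{1}{S}\mathbf{D}\mathbf{D}^\mathsf{T},\qquad \mathbf{P}=\begin{bmatrix}\mathbf{D}\\ \mathbf{U}\end{bmatrix}\in\mathbb{R}^{(n+M)\times S},\qquad \widetilde{\mathbf{A}}=\frac{1}{S}\mathbf{P}\mathbf{P}^\mathsf{T},\qquad \widetilde{\mathbf{W}}=\begin{bmatrix}\mathbf{W}&\mathbf{0}\\ \mathbf{0}&\mathbf{0}_{M\times M}\end{bmatrix},\qquad \mathbf{C}=\frac{1}{S}\mathbf{U}\mathbf{D}^\mathsf{T}.$$ Then: (i) for every $\lambda$, $\det(\widetilde{\mathbf{A}}\widetilde{\mathbf{W}}-\lambda\mathbf{I}_{n+M})=(-\lambda)^M\det(\mathbf{A}\mathbf{W}-\lambda\mathbf{I}_n)$; hence the eigenvalues of $\widetilde{\mathbf{A}}\widetilde{\mathbf{W}}$ (with algebraic multiplicity) are exactly the eigenvalues of $\mathbf{A}\mathbf{W}$ together with $M$ additional zero eigenvalues; (ii) if $\mathbf{z}\neq\mathbf{0}$ satisfies $\mathbf{A}\mathbf{W}\mathbf{z}=\lambda\mathbf{z}$ with $\lambda\neq 0$, then the vector $\begin{bmatrix}\mathbf{z}\\ \mathbf{v}\end{bmatrix}$ with $\mathbf{v}=\lambda^{-1}\mathbf{C}\mathbf{W}\mathbf{z}$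 satisfies $\widetilde{\mathbf{A}}\widetilde{\mathbf{W}}\begin{bmatrix}\mathbf{z}\\ \mathbf{v}\end{bmatrix}=\lambda\begin{bmatrix}\mathbf{z}\\ \mathbf{v}\end{bmatrix}$; conversely, if $\begin{bmatrix}\mathbf{q}\\ \mathbf{v}\end{bmatrix}\neq\mathbf{0}$ (with $\mathbf{q}\in\mathbb{R}^n$, $\mathbf{v}\in\mathbb{R}^M$) is an eigenvector of $\widetilde{\mathbf{A}}\widetilde{\mathbf{W}}$ with eigenvalue $\lambda\neq0$, then $\mathbf{q}\neq\mathbf{0}$, $\mathbf{A}\mathbf{W}\mathbf{q}=\lambda\mathbf{q}$, and $\mathbf{v}=\lambda^{-1}\mathbf{C}\mathbf{W}\mathbf{q}$.
   Context: This compares the weighted principal component analysis of a data matrix $\mathbf{D}$ of (centered) discretized shape-modification vectors (eigenproblem of $\mathbf{A}\mathbf{W}$, "KLE") with that of the augmented matrix $\mathbf{P}$ obtained by appending the (centered) design-variable samples $\mathbf{U}$ with zero weight (eigenproblem of $\widetilde{\mathbf{A}}\widetilde{\mathbf{W}}$, "parametric model embedding"). The element-measure matrix is taken to be the identity. *)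

theory Defs
  imports "Jordan_Normal_Form.Char_Poly"
begin

end

(*
  Because the weight of the appended rows is zero, the last M columns of the weighted augmented
  matrix vanish: At * Wt is block lower triangular with diagonal blocks A * W and the zero M x M
  matrix, and the lower-left block is C * W. Its characteristic polynomial is therefore that of
  A * W times x^M. For an eigenvalue lam different from 0, the lower block row of the eigen-equation
  reads C * W * q = lam * v, which forces v = C * W * q / lam; the upper block row is the
  eigen-equation of A * W.
*)
theory Submission
  imports Defs
begin

lemma append_rows_mult_transpose:
  fixes D U :: "'a :: comm_semiring_0 mat"
  assumes "D \<in> carrier_mat n s" and "U \<in> carrier_mat m s"
  shows "(D @\<^sub>r U) * (D @\<^sub>r U)\<^sup>T = four_block_mat (D * D\<^sup>T) (D * U\<^sup>T) (U * D\<^sup>T) (U * U\<^sup>T)"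
proof -
  have split: "D @\<^sub>r U = four_block_mat D (0\<^sub>m n 0) U (0\<^sub>m m 0)"
    unfolding append_rows_def using assms by auto
  have transpose: "(D @\<^sub>r U)\<^sup>T = four_block_mat D\<^sup>T U\<^sup>T (0\<^sub>m 0 n) (0\<^sub>m 0 m)"
    unfolding split using assms by (subst transpose_four_block_mat[of _ n s _ 0 _ m]) auto
  show ?thesis
    unfolding transpose unfolding split
    using assms by (subst mult_four_block_mat[of _ n s _ 0 _ m _ _ n _ m]) auto
qed

lemma four_block_mat_mult_zero_right:
  fixes A :: "'a :: semiring_0 mat"
  assumes "A \<in> carrier_mat n k" "B \<in> carrier_mat n m" "C \<in> carrier_mat l k" "E \<in> carrier_mat l m"
    and "W \<in> carrier_mat k k"
  shows "four_block_mat A B C E * four_block_mat W (0\<^sub>m k m) (0\<^sub>m m k) (0\<^sub>m m m)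
    = four_block_mat (A * W) (0\<^sub>m n m) (C * W) (0\<^sub>m l m)"
  using assms by (subst mult_four_block_mat[of _ n k _ m _ l _ _ k _ m]) auto

lemma gram_append_rows_mult_zero_padded_weight:
  fixes D U :: "'a :: comm_ring_1 mat"
  assumes "D \<in> carrier_mat n s" and "U \<in> carrier_mat m s" and "W \<in> carrier_mat n n"
  shows "(c \<cdot>\<^sub>m ((D @\<^sub>r U) * (D @\<^sub>r U)\<^sup>T)) * four_block_mat W (0\<^sub>m n m) (0\<^sub>m m n) (0\<^sub>m m m)
    = four_block_mat ((c \<cdot>\<^sub>m (D * D\<^sup>T)) * W) (0\<^sub>m n m) ((c \<cdot>\<^sub>m (U * D\<^sup>T)) * W) (0\<^sub>m m m)"
proof -
  have "c \<cdot>\<^sub>m ((D @\<^sub>r U) * (D @\<^sub>r U)\<^sup>T)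
      = four_block_mat (c \<cdot>\<^sub>m (D * D\<^sup>T)) (c \<cdot>\<^sub>m (D * U\<^sup>T)) (c \<cdot>\<^sub>m (U * D\<^sup>T)) (c \<cdot>\<^sub>m (U * U\<^sup>T))"
    using assms by (subst append_rows_mult_transpose) (auto intro!: smult_four_block_mat[of _ n n _ m _ m])
  then show ?thesis
    using assms by (simp add: four_block_mat_mult_zero_right)
qed

lemma char_poly_four_block_mat_upper_right_zero:
  fixes A :: "'a :: idom mat"
  assumes "A \<in> carrier_mat n n" "C \<in> carrier_mat m n" "B \<in> carrier_mat m m"
  shows "char_poly (four_block_mat A (0\<^sub>m n m) C B) = char_poly A * char_poly B"
proof -
  have "char_poly_matrix (four_block_mat A (0\<^sub>m n m) C B)
      = four_block_mat (char_poly_matrix A) (0\<^sub>m n m) (map_mat (\<lambda>a. [:- a:]) C) (char_poly_matrix B)"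
    using assms unfolding char_poly_matrix_def by (intro eq_matI) (auto simp: one_poly_def)
  then show ?thesis
    using assms unfolding char_poly_def by (simp add: det_four_block_mat_upper_right_zero[of _ n _ m])
qed

lemma char_poly_zero_mat: "char_poly (0\<^sub>m m m :: 'a :: comm_ring_1 mat) = monom 1 m"
proof -
  have "upper_triangular (0\<^sub>m m m :: 'a mat)"
    unfolding upper_triangular_def by auto
  then have "char_poly (0\<^sub>m m m :: 'a mat) = (\<Prod>a \<leftarrow> diag_mat (0\<^sub>m m m). [:- a, 1:])"
    by (intro char_poly_upper_triangular[of _ m]) auto
  also have "diag_mat (0\<^sub>m m m :: 'a mat) = replicate m 0"
    by (simp add: diag_mat_def list_eq_iff_nth_eq)
  finally show ?thesis
    by (simp add: monom_altdef)
qed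

lemma det_four_block_mat_zero_right_minus_smult_one:
  fixes A :: "'a :: idom mat"
  assumes "A \<in> carrier_mat n n" "C \<in> carrier_mat m n"
  shows "det (four_block_mat A (0\<^sub>m n m) C (0\<^sub>m m m) - lam \<cdot>\<^sub>m 1\<^sub>m (n + m))
    = (- lam) ^ m * det (A - lam \<cdot>\<^sub>m 1\<^sub>m n)"
proof -
  have "four_block_mat A (0\<^sub>m n m) C (0\<^sub>m m m) - lam \<cdot>\<^sub>m 1\<^sub>m (n + m)
      = four_block_mat (A - lam \<cdot>\<^sub>m 1\<^sub>m n) (0\<^sub>m n m) C ((- lam) \<cdot>\<^sub>m 1\<^sub>m m)"
    using assms by (intro eq_matI) auto
  also have "det \<dots> = det (A - lam \<cdot>\<^sub>m 1\<^sub>m n) * det ((- lam) \<cdot>\<^sub>m 1\<^sub>m m)"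
    using assms by (intro det_four_block_mat_upper_right_zero[of _ n _ m]) auto
  finally show ?thesis
    by simp
qed

lemma smult_append_vec: "c \<cdot>\<^sub>v (v @\<^sub>v w) = (c \<cdot>\<^sub>v v) @\<^sub>v (c \<cdot>\<^sub>v w)"
  by (rule eq_vecI) auto

lemma four_block_mat_zero_right_mult_append_vec:
  fixes A :: "'a :: semiring_0 mat"
  assumes "A \<in> carrier_mat n n" "C \<in> carrier_mat m n" "x \<in> carrier_vec n" "y \<in> carrier_vec m"
  shows "four_block_mat A (0\<^sub>m n m) C (0\<^sub>m m m) *\<^sub>v (x @\<^sub>v y) = (A *\<^sub>v x) @\<^sub>v (C *\<^sub>v x)"
proof -
  have "0\<^sub>m n m *\<^sub>v y = 0\<^sub>v n" "0\<^sub>m m m *\<^sub>v y = 0\<^sub>v m"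
    using assms by (auto simp: scalar_prod_def)
  then show ?thesis
    using assms by (subst four_block_mat_mult_vec[of _ n n _ m _ m]) auto
qed

lemma four_block_mat_zero_right_eigenvector_iff:
  fixes A :: "'a :: field mat"
  assumes "A \<in> carrier_mat n n" "C \<in> carrier_mat m n" "q \<in> carrier_vec n" "v \<in> carrier_vec m"
    and "lam \<noteq> 0"
  shows "four_block_mat A (0\<^sub>m n m) C (0\<^sub>m m m) *\<^sub>v (q @\<^sub>v v) = lam \<cdot>\<^sub>v (q @\<^sub>v v)
    \<longleftrightarrow> A *\<^sub>v q = lam \<cdot>\<^sub>v q \<and> v = (1 / lam) \<cdot>\<^sub>v (C *\<^sub>v q)"
proof -
  have carrier: "A *\<^sub>v q \<in> carrier_vec n" "lam \<cdot>\<^sub>v q \<in> carrier_vec n"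
    using assms by auto
  have "four_block_mat A (0\<^sub>m n m) C (0\<^sub>m m m) *\<^sub>v (q @\<^sub>v v) = lam \<cdot>\<^sub>v (q @\<^sub>v v)
      \<longleftrightarrow> A *\<^sub>v q = lam \<cdot>\<^sub>v q \<and> C *\<^sub>v q = lam \<cdot>\<^sub>v v"
    using assms by (simp add: four_block_mat_zero_right_mult_append_vec smult_append_vec
        append_vec_eq[OF carrier])
  also have "\<dots> \<longleftrightarrow> A *\<^sub>v q = lam \<cdot>\<^sub>v q \<and> v = (1 / lam) \<cdot>\<^sub>v (C *\<^sub>v q)"
    using \<open>lam \<noteq> 0\<close> by (auto simp: smult_smult_assoc)
  finally show ?thesis .
qed

lemma append_vec_eq_zero_iff:
  assumes "v \<in> carrier_vec n" "w \<in> carrier_vec m"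
  shows "v @\<^sub>v w = 0\<^sub>v (n + m) \<longleftrightarrow> v = 0\<^sub>v n \<and> w = 0\<^sub>v m"
proof -
  have "0\<^sub>v (n + m) = 0\<^sub>v n @\<^sub>v (0\<^sub>v m :: 'a vec)"
    by (rule eq_vecI) auto
  then show ?thesis
    using assms by simp
qed

lemma four_block_mat_zero_right_eigenvector_upper_nonzero:
  fixes A :: "'a :: field mat"
  assumes "A \<in> carrier_mat n n" "C \<in> carrier_mat m n" "q \<in> carrier_vec n" "v \<in> carrier_vec m"
    and "lam \<noteq> 0" and "q @\<^sub>v v \<noteq> 0\<^sub>v (n + m)"
    and "four_block_mat A (0\<^sub>m n m) C (0\<^sub>m m m) *\<^sub>v (q @\<^sub>v v) = lam \<cdot>\<^sub>v (q @\<^sub>v v)"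
  shows "q \<noteq> 0\<^sub>v n"
proof
  assume "q = 0\<^sub>v n"
  moreover have "v = (1 / lam) \<cdot>\<^sub>v (C *\<^sub>v q)"
    using assms four_block_mat_zero_right_eigenvector_iff by blast
  ultimately have "v = 0\<^sub>v m"
    using assms(2) by (intro eq_vecI) (auto simp: scalar_prod_def)
  with \<open>q = 0\<^sub>v n\<close> show False
    using assms by (simp add: append_vec_eq_zero_iff)
qed

theorem mainTheorem1:
  fixes L S M n :: nat and D U W :: "real mat"
  assumes "L > 0" and "S > 0" and "M > 0" and "n = 3 * L"
    and "D \<in> carrier_mat n S" and "U \<in> carrier_mat M S"
    and "W \<in> carrier_mat n n" and "diagonal_mat W"
    and "\<forall>i<n. W $$ (i, i) \<ge> 0"
  defines "A \<equiv> (1 / real S) \<cdot>\<^sub>m (D * D\<^sup>T)"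
    and "At \<equiv> (1 / real S) \<cdot>\<^sub>m ((D @\<^sub>r U) * (D @\<^sub>r U)\<^sup>T)"
    and "Wt \<equiv> four_block_mat W (0\<^sub>m n M) (0\<^sub>m M n) (0\<^sub>m M M)"
    and "C \<equiv> (1 / real S) \<cdot>\<^sub>m (U * D\<^sup>T)"
  shows
    "(\<forall>lam. det (At * Wt - lam \<cdot>\<^sub>m 1\<^sub>m (n + M)) = (- lam) ^ M * det (A * W - lam \<cdot>\<^sub>m 1\<^sub>m n))
     \<and> char_poly (At * Wt) = monom 1 M * char_poly (A * W)
     \<and> (\<forall>z lam. z \<in> carrier_vec n \<and> z \<noteq> 0\<^sub>v n \<and> lam \<noteq> 0 \<and> (A * W) *\<^sub>v z = lam \<cdot>\<^sub>v z \<longrightarrow>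
          (At * Wt) *\<^sub>v (z @\<^sub>v ((1 / lam) \<cdot>\<^sub>v ((C * W) *\<^sub>v z)))
            = lam \<cdot>\<^sub>v (z @\<^sub>v ((1 / lam) \<cdot>\<^sub>v ((C * W) *\<^sub>v z))))
     \<and> (\<forall>q v lam. q \<in> carrier_vec n \<and> v \<in> carrier_vec M \<and> q @\<^sub>v v \<noteq> 0\<^sub>v (n + M) \<and> lam \<noteq> 0
          \<and> (At * Wt) *\<^sub>v (q @\<^sub>v v) = lam \<cdot>\<^sub>v (q @\<^sub>v v) \<longrightarrow>
          q \<noteq> 0\<^sub>v n \<and> (A * W) *\<^sub>v q = lam \<cdot>\<^sub>v q \<and> v = (1 / lam) \<cdot>\<^sub>v ((C * W) *\<^sub>v q))"
proof -
  have block: "At * Wt = four_block_mat (A * W) (0\<^sub>m n M) (C * W) (0\<^sub>m M M)"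
    unfolding At_def Wt_def A_def C_def using assms(5-7) by (rule gram_append_rows_mult_zero_padded_weight)
  have AW: "A * W \<in> carrier_mat n n" and CW: "C * W \<in> carrier_mat M n"
    unfolding A_def C_def using assms(5-7) by auto
  show ?thesis
  proof (intro conjI allI impI)
    show "det (At * Wt - lam \<cdot>\<^sub>m 1\<^sub>m (n + M)) = (- lam) ^ M * det (A * W - lam \<cdot>\<^sub>m 1\<^sub>m n)" for lam
      unfolding block using AW CW by (rule det_four_block_mat_zero_right_minus_smult_one)
    show "char_poly (At * Wt) = monom 1 M * char_poly (A * W)"
      unfolding block using AW CW
      by (simp add: char_poly_four_block_mat_upper_right_zero char_poly_zero_mat ac_simps)
  next
    fix z and lam :: real
    assume "z \<in> carrier_vec n \<and> z \<noteq> 0\<^sub>v n \<and> lam \<noteq> 0 \<and> (A * W) *\<^sub>v z = lam \<cdot>\<^sub>v z"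
    moreover have "(1 / lam) \<cdot>\<^sub>v ((C * W) *\<^sub>v z) \<in> carrier_vec M"
      using CW by (intro carrier_vecI) auto
    ultimately show "(At * Wt) *\<^sub>v (z @\<^sub>v ((1 / lam) \<cdot>\<^sub>v ((C * W) *\<^sub>v z)))
      = lam \<cdot>\<^sub>v (z @\<^sub>v ((1 / lam) \<cdot>\<^sub>v ((C * W) *\<^sub>v z)))"
      unfolding block using AW CW by (simp add: four_block_mat_zero_right_eigenvector_iff)
  next
    fix q v and lam :: real
    assume eigen: "q \<in> carrier_vec n \<and> v \<in> carrier_vec M \<and> q @\<^sub>v v \<noteq> 0\<^sub>v (n + M) \<and> lam \<noteq> 0
      \<and> (At * Wt) *\<^sub>v (q @\<^sub>v v) = lam \<cdot>\<^sub>v (q @\<^sub>v v)"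
    then show "q \<noteq> 0\<^sub>v n"
      unfolding block by (elim conjE) (rule four_block_mat_zero_right_eigenvector_upper_nonzero[OF AW CW])
    from eigen have "(A * W) *\<^sub>v q = lam \<cdot>\<^sub>v q \<and> v = (1 / lam) \<cdot>\<^sub>v ((C * W) *\<^sub>v q)"
      unfolding block by (elim conjE) (simp add: four_block_mat_zero_right_eigenvector_iff[OF AW CW])
    then show "(A * W) *\<^sub>v q = lam \<cdot>\<^sub>v q" "v = (1 / lam) \<cdot>\<^sub>v ((C * W) *\<^sub>v q)"
      by blast+
  qed
qed

end
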